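(* Let $S\subseteq\Sigma^*$ and $T\subseteq\Sigma^+$ be regular languages of finite words, and let $T^\omega=\{x_1x_2x_3\cdots : x_i\in T\}$. Then $$\Psi(S\cdot T^\omega)=\{\Psi(y)\oplus\mathfrak{m}_\Gamma \;:\; y\in S\cdot T^*,\ \mathfrak{m}_\Gamma\in I(T)\},$$ where for nonempty $\Gamma\subseteq\Sigma$, $\mathfrak{m}_\Gamma$ is the mask with $\mathfrak{m}_\Gamma(\sigma)=\infty$ iff $\sigma\in\Gamma$, and $I(T)$ is the set of masks $\mathfrak{m}_\Gamma$ ($\emptyset\neq\Gamma\subseteq\Sigma$) such that for every $\sigma\in\Gamma$ there exists $w\in T\cap\Gamma^*$ in which $\sigma$ occurs.
   Context: For a finite word $x$, $\Psi(x)\in\mathbb{N}^\Sigma$ is its Parikh image (number of occurrences of each letter). For an infinite word $w\in\Sigma^\omega$, $\Psi(w)\in\mathbb{N}_\infty^\Sigma$ gives for each letter its number of occurrences if finite and $\infty$ otherwise; $\Psi(L)=\{\Psi(w):w\in L\}$. A mask is a vector in $\{0,\infty\}^\Sigma\setminus\{\vec 0\}$; for $\vec x\in\mathbb{N}^\Sigma$ and a mask $\mathfrak{m}$, $\vec x\oplus\mathfrak{m}$ has coordinate $\vec x(\sigma)$ where $\mathfrak{m}(\sigma)=0$ and $\infty$ where $\mathfrak{m}(\sigma)=\infty$. *)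

theory Defs
  imports Main "HOL-Library.Omega_Words_Fun" "HOL-Library.Extended_Nat"
begin

definition lang_conc :: "'a list set \<Rightarrow> 'a list set \<Rightarrow> 'a list set" where
  "lang_conc A B = {u @ v | u v. u \<in> A \<and> v \<in> B}"

definition lang_star :: "'a list set \<Rightarrow> 'a list set" where
  "lang_star A = {concat xs | xs. set xs \<subseteq> A}"

inductive regular :: "'a list set \<Rightarrow> bool" where
  reg_empty: "regular {}"
| reg_eps: "regular {[]}"
| reg_letter: "regular {[a]}"
| reg_union: "regular A \<Longrightarrow> regular B \<Longrightarrow> regular (A \<union> B)"
| reg_conc: "regular A \<Longrightarrow> regular B \<Longrightarrow> regular (lang_conc A B)"
| reg_star: "regular A \<Longrightarrow> regular (lang_star A)"

definition omega_power :: "'a list set \<Rightarrow> 'a word set" where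
  "omega_power T = {w. \<exists>p :: nat \<Rightarrow> nat. p 0 = 0 \<and> strict_mono p \<and>
       (\<forall>i. subsequence w (p i) (p (Suc i)) \<in> T)}"

definition lang_omega_conc :: "'a list set \<Rightarrow> 'a word set \<Rightarrow> 'a word set" where
  "lang_omega_conc S W = {u \<frown> w | u w. u \<in> S \<and> w \<in> W}"

definition parikh :: "'a list \<Rightarrow> 'a \<Rightarrow> nat" where
  "parikh x = (\<lambda>\<sigma>. count_list x \<sigma>)"

definition parikh_omega :: "'a word \<Rightarrow> 'a \<Rightarrow> enat" where
  "parikh_omega w = (\<lambda>\<sigma>. if finite {n. w n = \<sigma>} then enat (card {n. w n = \<sigma>}) else \<infinity>)"

definition mask_of :: "'a set \<Rightarrow> 'a \<Rightarrow> enat" where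
  "mask_of \<Gamma> = (\<lambda>\<sigma>. if \<sigma> \<in> \<Gamma> then \<infinity> else 0)"

definition mask_add :: "('a \<Rightarrow> nat) \<Rightarrow> ('a \<Rightarrow> enat) \<Rightarrow> 'a \<Rightarrow> enat" (infixl \<open>\<oplus>\<^sub>m\<close> 65) where
  "x \<oplus>\<^sub>m m = (\<lambda>\<sigma>. if m \<sigma> = \<infinity> then \<infinity> else enat (x \<sigma>))"

definition I_masks :: "'a list set \<Rightarrow> ('a \<Rightarrow> enat) set" where
  "I_masks T = {mask_of \<Gamma> | \<Gamma>. \<Gamma> \<noteq> {} \<and>
      (\<forall>\<sigma>\<in>\<Gamma>. \<exists>w\<in>T. set w \<subseteq> \<Gamma> \<and> \<sigma> \<in> set w)}"

end

theory Submission
  imports Defs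
begin

text \<open>Write an infinite word as a finite prefix followed by a tail \<open>v\<close> in which every letter
  that occurs at all occurs infinitely often. Then its Parikh image is the Parikh image of the
  prefix, masked by the set \<open>limit v\<close> of letters occurring infinitely often. For \<open>w \<in> T\<^sup>\<omega>\<close>
  such a tail can be cut at a factor boundary, and the factors of the tail witness that the mask
  of \<open>limit v\<close> lies in \<open>I(T)\<close>. Conversely, a mask in \<open>I(T)\<close> is realised by repeating forever
  a concatenation of its witnesses.\<close>

lemma prefix_eq_concat_blocks:
  assumes "mono (p :: nat \<Rightarrow> nat)" "p 0 = 0"
  shows "prefix (p N) w = concat (map (\<lambda>i. w[p i \<rightarrow> p (Suc i)]) [0..<N])"
proof (induction N)
  case (Suc N)
  have "p N \<le> p (Suc N)"
    using assms(1) by (simp add: monoD)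
  then have "prefix (p (Suc N)) w = prefix (p N) w @ w[p N \<rightarrow> p (Suc N)]"
    using subsequence_append[of w "p N" "p (Suc N) - p N"] by simp
  then show ?case
    using Suc.IH by simp
qed (simp add: assms(2))

lemma range_iter:
  assumes "0 < length z"
  shows "range z\<^sup>\<omega> = set z"
proof
  show "range z\<^sup>\<omega> \<subseteq> set z"
    using assms by (auto intro: nth_mem)
  show "set z \<subseteq> range z\<^sup>\<omega>"
  proof
    fix a assume "a \<in> set z"
    then obtain i where "i < length z" "a = z ! i"
      by (auto simp: in_set_conv_nth)
    then have "a = z\<^sup>\<omega> i"
      using assms by simp
    then show "a \<in> range z\<^sup>\<omega>"
      by blast
  qed
qed

lemma omega_power_coinduct:
  assumes "w \<in> A"
    and step: "\<And>w. w \<in> A \<Longrightarrow> \<exists>x v. x \<in> T \<and> x \<noteq> [] \<and> v \<in> A \<and> w = x \<frown> v"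
  shows "w \<in> omega_power T"
proof -
  obtain hd_of tl_of where peel: "\<And>w. w \<in> A \<Longrightarrow>
      hd_of w \<in> T \<and> hd_of w \<noteq> [] \<and> tl_of w \<in> A \<and> w = hd_of w \<frown> tl_of w"
    using step by metis
  define ws where "ws n = (tl_of ^^ n) w" for n
  define p where "p n = (\<Sum>i<n. length (hd_of (ws i)))" for n
  have wsA: "ws n \<in> A" for n
    by (induction n) (auto simp: ws_def assms(1) peel)
  have suffix_p: "suffix (p n) w = ws n" for n
  proof (induction n)
    case (Suc n)
    have "suffix (p (Suc n)) w = suffix (length (hd_of (ws n))) (suffix (p n) w)"
      by (simp add: p_def)
    also have "\<dots> = suffix (length (hd_of (ws n))) (ws n)"
      unfolding Suc.IH ..
    also have "\<dots> = tl_of (ws n)"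
      using peel[OF wsA[of n]] by (metis suffix_conc_length)
    finally show ?case by (simp add: ws_def)
  qed (simp add: p_def ws_def)
  have block: "w[p i \<rightarrow> p (Suc i)] = hd_of (ws i)" for i
  proof -
    have "w[p i \<rightarrow> p (Suc i)] = prefix (p (Suc i) - p i) (suffix (p i) w)"
      by (rule subsequence_prefix_suffix[symmetric])
    also have "\<dots> = prefix (length (hd_of (ws i))) (ws i)"
      by (simp only: suffix_p) (simp add: p_def)
    also have "\<dots> = hd_of (ws i)"
      using peel[OF wsA[of i]] by (metis prefix_conc_length)
    finally show ?thesis .
  qed
  moreover have "strict_mono p"
    using peel[OF wsA] by (simp add: strict_mono_Suc_iff p_def)
  moreover have "p 0 = 0"
    by (simp add: p_def)
  ultimately show ?thesis
    unfolding omega_power_def using peel[OF wsA] by auto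
qed

lemma concat_conc_iter_in_omega_power:
  assumes "set xs \<subseteq> T" "set zs \<subseteq> T" "zs \<noteq> []" "[] \<notin> T"
  shows "concat xs \<frown> (concat zs)\<^sup>\<omega> \<in> omega_power T"
proof -
  let ?A = "{concat ys \<frown> (concat zs)\<^sup>\<omega> | ys. set ys \<subseteq> T}"
  have unroll: "(concat zs)\<^sup>\<omega> = concat zs \<frown> (concat zs)\<^sup>\<omega>"
    using assms(2-4) by (intro iter_unroll) (cases zs; auto)
  have "\<exists>x v. x \<in> T \<and> x \<noteq> [] \<and> v \<in> ?A \<and> w = x \<frown> v" if w: "w \<in> ?A" for w
  proof -
    obtain ys where ys: "set ys \<subseteq> T" "w = concat ys \<frown> (concat zs)\<^sup>\<omega>"
      using w by blast
    define us where "us = (if ys = [] then zs else ys)"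
    have "w = concat us \<frown> (concat zs)\<^sup>\<omega>" "set us \<subseteq> T"
      using ys unroll assms(2) by (auto simp: us_def)
    moreover obtain x us' where "us = x # us'"
      using assms(3) by (cases ys; cases zs) (auto simp: us_def)
    ultimately have "w = x \<frown> (concat us' \<frown> (concat zs)\<^sup>\<omega>)" "x \<in> T" "set us' \<subseteq> T"
      by auto
    then show ?thesis
      using assms(4) by blast
  qed
  then show ?thesis
    using assms(1) by (intro omega_power_coinduct[of _ ?A]) auto
qed

lemma omega_power_split_limit:
  assumes "w \<in> omega_power T" "finite (range w)"
  obtains x v where "w = x \<frown> v" "x \<in> lang_star T" "range v \<subseteq> limit v"
    "mask_of (limit v) \<in> I_masks T"
proof -
  obtain p where p0: "p 0 = 0" and p: "strict_mono p" and blocks: "\<And>i. w[p i \<rightarrow> p (Suc i)] \<in> T"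
    using assms(1) by (auto simp: omega_power_def)
  have idx: "idx_sequence p"
    using p p0 by (simp add: idx_sequence_def strict_mono_Suc_iff)
  obtain k where k: "limit w = range (suffix k w)"
    using limit_is_suffix[OF assms(2)] by blast
  have "k \<le> p k"
    using p by (rule strict_mono_imp_increasing)
  define v where "v = suffix (p k) w"
  have "w n \<in> range (suffix k w)" if "k \<le> n" for n
    using that by (metis le_add_diff_inverse rangeI suffix_nth)
  then have late_letters: "w ` {p k..} \<subseteq> limit w"
    using \<open>k \<le> p k\<close> by (auto simp: k)
  have "w = prefix (p k) w \<frown> v"
    by (simp add: v_def)
  moreover have "prefix (p k) w \<in> lang_star T"
    using prefix_eq_concat_blocks[OF strict_mono_mono[OF p] p0] blocks
    by (auto simp: lang_star_def intro!: exI[of _ "map (\<lambda>i. w[p i \<rightarrow> p (Suc i)]) [0..<k]"])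
  moreover have "range v \<subseteq> limit v"
    using late_letters by (auto simp: v_def)
  moreover have "mask_of (limit v) \<in> I_masks T"
  proof -
    have "\<exists>x\<in>T. set x \<subseteq> limit w \<and> \<sigma> \<in> set x" if \<sigma>: "\<sigma> \<in> limit w" for \<sigma>
    proof -
      obtain n where n: "p k \<le> n" "w n = \<sigma>"
        using limit_in_range_suffixD[OF \<sigma>, of "p k"] by (metis le_add1 rangeE suffix_nth)
      obtain i where i: "p i \<le> n" "n < p (Suc i)"
        using idx_sequence_interval[OF idx, of n] by auto
      have "k \<le> i"
        using i n idx_sequence_mono[OF idx, of "Suc i" k] by linarith
      then have "p k \<le> p i"
        by (rule idx_sequence_mono[OF idx])
      then have "set (w[p i \<rightarrow> p (Suc i)]) \<subseteq> limit w"
        using late_letters by auto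
      moreover have "\<sigma> \<in> set (w[p i \<rightarrow> p (Suc i)])"
        using i n by auto
      ultimately show ?thesis
        using blocks by blast
    qed
    moreover have "limit w \<noteq> {}"
      using limit_nonempty[OF assms(2)] by blast
    ultimately show ?thesis
      by (auto simp: I_masks_def v_def)
  qed
  ultimately show ?thesis
    using that by blast
qed

lemma I_masks_witnesses:
  assumes "finite \<Gamma>" "\<Gamma> \<noteq> {}" "\<forall>\<sigma>\<in>\<Gamma>. \<exists>w\<in>T. set w \<subseteq> \<Gamma> \<and> \<sigma> \<in> set w"
  obtains zs where "set zs \<subseteq> T" "zs \<noteq> []" "set (concat zs) = \<Gamma>"
proof -
  obtain f where f: "\<And>\<sigma>. \<sigma> \<in> \<Gamma> \<Longrightarrow> f \<sigma> \<in> T \<and> set (f \<sigma>) \<subseteq> \<Gamma> \<and> \<sigma> \<in> set (f \<sigma>)"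
    using assms(3) by metis
  obtain gs where "set gs = \<Gamma>"
    using finite_list[OF assms(1)] by blast
  then show ?thesis
    using that[of "map f gs"] f assms(2) by fastforce
qed

lemma parikh_omega_eq_infinity_iff: "parikh_omega w \<sigma> = \<infinity> \<longleftrightarrow> \<sigma> \<in> limit w"
  by (simp add: parikh_omega_def limit_vimage vimage_def)

lemma parikh_omega_conc_notin_range:
  assumes "\<sigma> \<notin> range v"
  shows "parikh_omega (y \<frown> v) \<sigma> = enat (count_list y \<sigma>)"
proof -
  have "{n. (y \<frown> v) n = \<sigma>} = {i. i < length y \<and> y ! i = \<sigma>}"
    using assms by (auto simp: conc_def split: if_splits) (metis rangeI)
  then show ?thesis
    by (simp add: parikh_omega_def count_list_eq_length_filter length_filter_conv_card eq_commute)
qed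

lemma parikh_omega_conc:
  assumes "range v \<subseteq> limit v"
  shows "parikh_omega (y \<frown> v) = parikh y \<oplus>\<^sub>m mask_of (limit v)"
proof
  fix \<sigma>
  show "parikh_omega (y \<frown> v) \<sigma> = (parikh y \<oplus>\<^sub>m mask_of (limit v)) \<sigma>"
  proof (cases "\<sigma> \<in> limit v")
    case True
    then show ?thesis
      using parikh_omega_eq_infinity_iff[of "y \<frown> v"] by (simp add: mask_add_def mask_of_def)
  next
    case False
    then show ?thesis
      using assms parikh_omega_conc_notin_range[of \<sigma> v y]
      by (auto simp: mask_add_def mask_of_def parikh_def)
  qed
qed

lemma parikh_omega_image_subset_masked:
  fixes S T :: "('a::finite) list set"
  shows "parikh_omega ` lang_omega_conc S (omega_power T) \<subseteq>
         {parikh y \<oplus>\<^sub>m m | y m. y \<in> lang_conc S (lang_star T) \<and> m \<in> I_masks T}"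
proof
  fix X assume "X \<in> parikh_omega ` lang_omega_conc S (omega_power T)"
  then obtain u w where u: "u \<in> S" and w: "w \<in> omega_power T" and X: "X = parikh_omega (u \<frown> w)"
    by (auto simp: lang_omega_conc_def)
  obtain x v where "w = x \<frown> v" "x \<in> lang_star T" "range v \<subseteq> limit v" "mask_of (limit v) \<in> I_masks T"
    using omega_power_split_limit[OF w finite] .
  moreover from this(1,3) have "X = parikh (u @ x) \<oplus>\<^sub>m mask_of (limit v)"
    by (simp add: X parikh_omega_conc)
  ultimately show "X \<in> {parikh y \<oplus>\<^sub>m m | y m. y \<in> lang_conc S (lang_star T) \<and> m \<in> I_masks T}"
    using u by (auto simp: lang_conc_def)
qed

lemma masked_subset_parikh_omega_image:
  fixes S T :: "('a::finite) list set"
  assumes "[] \<notin> T"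
  shows "{parikh y \<oplus>\<^sub>m m | y m. y \<in> lang_conc S (lang_star T) \<and> m \<in> I_masks T} \<subseteq>
         parikh_omega ` lang_omega_conc S (omega_power T)"
proof
  fix X assume "X \<in> {parikh y \<oplus>\<^sub>m m | y m. y \<in> lang_conc S (lang_star T) \<and> m \<in> I_masks T}"
  then obtain u xs \<Gamma> where u: "u \<in> S" and xs: "set xs \<subseteq> T" and X: "X = parikh (u @ concat xs) \<oplus>\<^sub>m mask_of \<Gamma>"
    and "\<Gamma> \<noteq> {}" "\<forall>\<sigma>\<in>\<Gamma>. \<exists>w\<in>T. set w \<subseteq> \<Gamma> \<and> \<sigma> \<in> set w"
    by (auto simp: lang_conc_def lang_star_def I_masks_def)
  then obtain zs where zs: "set zs \<subseteq> T" "zs \<noteq> []" and \<Gamma>: "set (concat zs) = \<Gamma>"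
    using I_masks_witnesses[OF finite] by blast
  define z where "z = concat zs"
  have "0 < length z"
    using \<Gamma> \<open>\<Gamma> \<noteq> {}\<close> by (cases z) (auto simp: z_def)
  then have "range z\<^sup>\<omega> \<subseteq> limit z\<^sup>\<omega>" "limit z\<^sup>\<omega> = \<Gamma>"
    by (simp_all only: range_iter limit_iter \<Gamma> z_def subset_refl)
  then have "X = parikh_omega (u \<frown> concat xs \<frown> z\<^sup>\<omega>)"
    by (simp only: X parikh_omega_conc conc_conc)
  moreover have "u \<frown> concat xs \<frown> z\<^sup>\<omega> \<in> lang_omega_conc S (omega_power T)"
    unfolding lang_omega_conc_def z_def
    using u concat_conc_iter_in_omega_power[OF xs zs assms] by blast
  ultimately show "X \<in> parikh_omega ` lang_omega_conc S (omega_power T)"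
    by (rule image_eqI)
qed

theorem mainTheorem2:
  fixes S T :: "('a::finite) list set"
  assumes "regular S" and "regular T" and "[] \<notin> T"
  shows "parikh_omega ` lang_omega_conc S (omega_power T) =
         {parikh y \<oplus>\<^sub>m m | y m. y \<in> lang_conc S (lang_star T) \<and> m \<in> I_masks T}"
  using parikh_omega_image_subset_masked masked_subset_parikh_omega_image[OF assms(3)]
  by (rule equalityI)

end
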